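(* Let $f:\mathbb{R}^d\to\mathbb{R}$ be $\beta$-smooth with minimum value $f^\star$. Then the iterates of AdaSGD (as in the context) satisfy $$\sum_{t=1}^T\nabla f(w_t)\cdot g_t\le\frac{\gamma\Delta_1}{\eta}+\Big(\frac{2\bar\Delta_T}{\eta}+\eta\beta\Big)\sqrt{\sum_{t=1}^T\|g_t\|^2},$$ where $\Delta_1=f(w_1)-f^\star$ and $\bar\Delta_T=\max_{t\le T}f(w_t)-f^\star$.
   Context: $\|\cdot\|$ is the Euclidean norm. $\beta$-smooth: $\|\nabla f(x)-\nabla f(y)\|\le\beta\|x-y\|$. AdaSGD with parameters $\eta,\gamma>0$: arbitrary $w_1\in\mathbb{R}^d$; for $t=1,\dots,T$, $g_t$ is the stochastic gradient returned by an oracle at $w_t$, $\eta_t=\eta/\sqrt{\gamma^2+\sum_{s=1}^t\|g_s\|^2}$, and $w_{t+1}=w_t-\eta_tg_t$. *)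

theory Defs
  imports "HOL-Analysis.Analysis"
begin

definition adasgd_step :: "real \<Rightarrow> real \<Rightarrow> (nat \<Rightarrow> 'a::real_normed_vector) \<Rightarrow> nat \<Rightarrow> real" where
  "adasgd_step \<eta> \<gamma> g t = \<eta> / sqrt (\<gamma>\<^sup>2 + (\<Sum>s=1..t. (norm (g s))\<^sup>2))"

definition adasgd_iterates :: "real \<Rightarrow> real \<Rightarrow> (nat \<Rightarrow> 'a::real_normed_vector) \<Rightarrow> (nat \<Rightarrow> 'a) \<Rightarrow> nat \<Rightarrow> bool" where
  "adasgd_iterates \<eta> \<gamma> g w T \<longleftrightarrow> (\<forall>t\<in>{1..T}. w (t+1) = w t - adasgd_step \<eta> \<gamma> g t *\<^sub>R g t)"

end

theory Submission
  imports Defs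
begin

text \<open>By the descent lemma, an AdaSGD step with step size \<open>\<eta>\<^sub>t = \<eta> / r\<^sub>t\<close>, where
  \<open>r\<^sub>t = sqrt (\<gamma>\<^sup>2 + \<Sum>s\<le>t. norm (g s)\<^sup>2)\<close>, satisfies
  \<open>\<nabla>f(w\<^sub>t) \<bullet> g\<^sub>t \<le> (f(w\<^sub>t) - f(w\<^sub>t\<^sub>+\<^sub>1)) r\<^sub>t / \<eta> + \<beta> \<eta> norm (g\<^sub>t)\<^sup>2 / (2 r\<^sub>t)\<close>.
  Since \<open>r\<close> is nondecreasing with \<open>r\<^sub>0 = \<gamma>\<close>, summation by parts bounds the sum of the first terms
  by \<open>(\<gamma> \<Delta>\<^sub>1 + M (r\<^sub>T - \<gamma>)) / \<eta>\<close>, where \<open>M\<close> is the largest suboptimality gap; the second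
  terms sum to at most \<open>\<beta> \<eta> (r\<^sub>T - \<gamma>)\<close> because \<open>b / sqrt (G + b) \<le> 2 (sqrt (G + b) - sqrt G)\<close>.
  Finally \<open>r\<^sub>T - \<gamma> \<le> sqrt (\<Sum>t\<le>T. norm (g t)\<^sup>2)\<close>. This gives the bound even with \<open>M\<close> in place
  of \<open>2 M\<close>, and only uses that \<open>fstar\<close> is a lower bound of \<open>f\<close>, not that it is attained.\<close>

lemma descent_lemma:
  fixes f :: "'a::real_inner \<Rightarrow> real" and df :: "'a \<Rightarrow> 'a"
  assumes grad: "\<And>x. (f has_derivative (\<lambda>h. df x \<bullet> h)) (at x)"
    and smooth: "\<And>x y. norm (df x - df y) \<le> \<beta> * norm (x - y)"
  shows "f y \<le> f x + df x \<bullet> (y - x) + \<beta> / 2 * (norm (y - x))\<^sup>2"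
proof -
  define v where "v = y - x"
  define \<phi> where "\<phi> s = f (x + s *\<^sub>R v) - s * (df x \<bullet> v) - \<beta> / 2 * s\<^sup>2 * (norm v)\<^sup>2" for s
  have deriv: "(\<phi> has_real_derivative (df (x + s *\<^sub>R v) \<bullet> v - df x \<bullet> v - \<beta> * s * (norm v)\<^sup>2)) (at s)"
    for s
  proof -
    have "((\<lambda>s. x + s *\<^sub>R v) has_derivative (\<lambda>h. h *\<^sub>R v)) (at s)"
      by (auto intro!: derivative_eq_intros)
    from has_derivative_compose[OF this grad]
    have f_line: "((\<lambda>s. f (x + s *\<^sub>R v)) has_real_derivative (df (x + s *\<^sub>R v) \<bullet> v)) (at s)"
      by (simp add: has_field_derivative_def mult.commute[of _ "df (x + s *\<^sub>R v) \<bullet> v"])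
    show ?thesis
      unfolding \<phi>_def by (rule derivative_eq_intros f_line refl | simp)+
  qed
  have deriv_nonpos: "df (x + s *\<^sub>R v) \<bullet> v - df x \<bullet> v - \<beta> * s * (norm v)\<^sup>2 \<le> 0" if "0 \<le> s" for s
  proof -
    have "df (x + s *\<^sub>R v) \<bullet> v - df x \<bullet> v = (df (x + s *\<^sub>R v) - df x) \<bullet> v"
      by (simp add: inner_diff_left)
    also have "\<dots> \<le> norm (df (x + s *\<^sub>R v) - df x) * norm v"
      by (rule norm_cauchy_schwarz)
    also have "\<dots> \<le> \<beta> * norm (s *\<^sub>R v) * norm v"
      using smooth[of "x + s *\<^sub>R v" x] by (simp add: mult_right_mono)
    also have "\<dots> = \<beta> * s * (norm v)\<^sup>2"
      using that by (simp add: power2_eq_square)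
    finally show ?thesis by simp
  qed
  have "\<phi> 1 \<le> \<phi> 0"
    by (rule DERIV_nonpos_imp_nonincreasing[of 0 1]) (use deriv deriv_nonpos in \<open>auto intro!: exI\<close>)
  then show ?thesis
    unfolding \<phi>_def v_def by (simp add: inner_diff_right)
qed

lemma gradient_step_inner_le:
  fixes f :: "'a::real_inner \<Rightarrow> real" and df :: "'a \<Rightarrow> 'a"
  assumes grad: "\<And>x. (f has_derivative (\<lambda>h. df x \<bullet> h)) (at x)"
    and smooth: "\<And>x y. norm (df x - df y) \<le> \<beta> * norm (x - y)"
    and "c > 0"
  shows "df x \<bullet> v \<le> (f x - f (x - c *\<^sub>R v)) / c + \<beta> / 2 * (c * (norm v)\<^sup>2)"
proof -
  have "f (x - c *\<^sub>R v) \<le> f x - c * (df x \<bullet> v) + \<beta> / 2 * (c * (c * (norm v)\<^sup>2))"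
    using descent_lemma[OF grad smooth, of "x - c *\<^sub>R v" x] \<open>c > 0\<close>
    by (simp add: power_mult_distrib power2_eq_square mult_ac)
  then show ?thesis
    using \<open>c > 0\<close> by (simp add: field_simps)
qed

lemma lipschitz_constant_nonneg:
  fixes h :: "'a::euclidean_space \<Rightarrow> 'b::real_normed_vector"
  assumes "\<And>x y. norm (h x - h y) \<le> \<beta> * norm (x - y)"
  shows "\<beta> \<ge> 0"
proof -
  obtain b :: 'a where "b \<in> Basis"
    using nonempty_Basis by blast
  then have "norm (h b - h 0) \<le> \<beta>"
    using assms[of b 0] by simp
  then show ?thesis
    using norm_ge_zero order_trans by blast
qed

lemma summation_by_parts_le:
  fixes D r :: "nat \<Rightarrow> real"
  assumes "\<And>t. t \<in> {1..n} \<Longrightarrow> D t \<le> M" and "\<And>t. r t \<le> r (Suc t)"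
  shows "(\<Sum>t=1..n. (D t - D (t + 1)) * r t) \<le> D 1 * r 0 + M * (r n - r 0) - D (n + 1) * r n"
  using assms(1)
proof (induction n)
  case 0
  then show ?case by simp
next
  case (Suc n)
  have "D (Suc n) * (r (Suc n) - r n) \<le> M * (r (Suc n) - r n)"
    using Suc.prems[of "Suc n"] assms(2)[of n] by (simp add: mult_right_mono)
  with Suc show ?case by (simp add: algebra_simps)
qed

lemma div_sqrt_add_le:
  fixes G b :: real
  assumes "0 \<le> G" "0 \<le> b"
  shows "b / sqrt (G + b) \<le> 2 * (sqrt (G + b) - sqrt G)"
proof (cases "G + b = 0")
  case False
  have "b = (sqrt (G + b) - sqrt G) * (sqrt (G + b) + sqrt G)"
    using assms by (simp add: algebra_simps)
  also have "\<dots> \<le> (sqrt (G + b) - sqrt G) * (2 * sqrt (G + b))"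
    using assms by (intro mult_left_mono) auto
  also have "\<dots> = 2 * (sqrt (G + b) - sqrt G) * sqrt (G + b)"
    by (simp only: mult_ac)
  finally show ?thesis
    using assms False by (subst pos_divide_le_eq) auto
qed (use assms in simp)

lemma sum_div_sqrt_partial_sums_le:
  fixes a :: "nat \<Rightarrow> real"
  assumes "0 \<le> c" and "\<And>t. 0 \<le> a t"
  shows "(\<Sum>t=1..n. a t / sqrt (c + (\<Sum>s=1..t. a s))) \<le> 2 * (sqrt (c + (\<Sum>s=1..n. a s)) - sqrt c)"
proof (induction n)
  case (Suc n)
  have "0 \<le> c + (\<Sum>s=1..n. a s)"
    using assms by (simp add: sum_nonneg)
  from div_sqrt_add_le[OF this assms(2)[of "Suc n"]] Suc.IH
  show ?case by (simp add: add.assoc)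
qed simp

definition adasgd_scale :: "real \<Rightarrow> (nat \<Rightarrow> 'a::real_normed_vector) \<Rightarrow> nat \<Rightarrow> real" where
  "adasgd_scale \<gamma> g t = sqrt (\<gamma>\<^sup>2 + (\<Sum>s=1..t. (norm (g s))\<^sup>2))"

lemma adasgd_step_eq: "adasgd_step \<eta> \<gamma> g t = \<eta> / adasgd_scale \<gamma> g t"
  by (simp add: adasgd_step_def adasgd_scale_def)

lemma adasgd_scale_0: "\<gamma> \<ge> 0 \<Longrightarrow> adasgd_scale \<gamma> g 0 = \<gamma>"
  by (simp add: adasgd_scale_def)

lemma adasgd_scale_pos: "\<gamma> > 0 \<Longrightarrow> adasgd_scale \<gamma> g t > 0"
  by (simp add: adasgd_scale_def add_pos_nonneg sum_nonneg)

lemma adasgd_scale_Suc_ge: "adasgd_scale \<gamma> g t \<le> adasgd_scale \<gamma> g (Suc t)"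
  by (simp add: adasgd_scale_def)

lemma adasgd_scale_ge: "\<gamma> \<ge> 0 \<Longrightarrow> \<gamma> \<le> adasgd_scale \<gamma> g t"
  using real_sqrt_le_mono[of "\<gamma>\<^sup>2" "\<gamma>\<^sup>2 + (\<Sum>s=1..t. (norm (g s))\<^sup>2)"]
  by (simp add: adasgd_scale_def sum_nonneg)

lemma adasgd_scale_le: "\<gamma> \<ge> 0 \<Longrightarrow> adasgd_scale \<gamma> g t \<le> \<gamma> + sqrt (\<Sum>s=1..t. (norm (g s))\<^sup>2)"
  using sqrt_add_le_add_sqrt[of "\<gamma>\<^sup>2" "\<Sum>s=1..t. (norm (g s))\<^sup>2"]
  by (simp add: adasgd_scale_def sum_nonneg)

lemma sum_adasgd_step_norm_le:
  assumes "\<gamma> \<ge> 0" "\<eta> \<ge> 0"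
  shows "(\<Sum>t=1..T. adasgd_step \<eta> \<gamma> g t * (norm (g t))\<^sup>2) \<le> 2 * \<eta> * (adasgd_scale \<gamma> g T - \<gamma>)"
proof -
  have "(\<Sum>t=1..T. (norm (g t))\<^sup>2 / adasgd_scale \<gamma> g t) \<le> 2 * (adasgd_scale \<gamma> g T - \<gamma>)"
    using sum_div_sqrt_partial_sums_le[of "\<gamma>\<^sup>2" "\<lambda>t. (norm (g t))\<^sup>2" T] assms
    by (simp add: adasgd_scale_def)
  from mult_left_mono[OF this \<open>\<eta> \<ge> 0\<close>] show ?thesis
    by (simp add: adasgd_step_eq sum_distrib_left right_diff_distrib mult_ac)
qed

lemma adasgd_sum_inner_le:
  fixes f :: "'a::euclidean_space \<Rightarrow> real" and df :: "'a \<Rightarrow> 'a"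
  assumes grad: "\<And>x. (f has_derivative (\<lambda>h. df x \<bullet> h)) (at x)"
    and smooth: "\<And>x y. norm (df x - df y) \<le> \<beta> * norm (x - y)"
    and "\<eta> > 0" "\<gamma> > 0" and iter: "adasgd_iterates \<eta> \<gamma> g w T"
  shows "(\<Sum>t=1..T. df (w t) \<bullet> g t)
    \<le> (\<Sum>t=1..T. (f (w t) - f (w (t + 1))) * adasgd_scale \<gamma> g t) / \<eta>
      + \<eta> * \<beta> * (adasgd_scale \<gamma> g T - \<gamma>)"
proof -
  let ?\<eta>\<^sub>t = "adasgd_step \<eta> \<gamma> g"
  have step: "df (w t) \<bullet> g t
      \<le> (f (w t) - f (w (t + 1))) * adasgd_scale \<gamma> g t / \<eta> + \<beta> / 2 * (?\<eta>\<^sub>t t * (norm (g t))\<^sup>2)"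
    if "t \<in> {1..T}" for t
  proof -
    have "w (t + 1) = w t - ?\<eta>\<^sub>t t *\<^sub>R g t"
      using iter that unfolding adasgd_iterates_def by blast
    moreover have "?\<eta>\<^sub>t t > 0"
      using \<open>\<eta> > 0\<close> adasgd_scale_pos[OF \<open>\<gamma> > 0\<close>, of g t] by (simp add: adasgd_step_eq)
    ultimately have "df (w t) \<bullet> g t \<le> (f (w t) - f (w (t + 1))) / ?\<eta>\<^sub>t t + \<beta> / 2 * (?\<eta>\<^sub>t t * (norm (g t))\<^sup>2)"
      using gradient_step_inner_le[OF grad smooth, of "?\<eta>\<^sub>t t" "w t" "g t"] by simp
    then show ?thesis
      by (simp add: adasgd_step_eq)
  qed
  have "(\<Sum>t=1..T. df (w t) \<bullet> g t)
      \<le> (\<Sum>t=1..T. (f (w t) - f (w (t + 1))) * adasgd_scale \<gamma> g t / \<eta> + \<beta> / 2 * (?\<eta>\<^sub>t t * (norm (g t))\<^sup>2))"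
    using step by (rule sum_mono)
  also have "\<dots> = (\<Sum>t=1..T. (f (w t) - f (w (t + 1))) * adasgd_scale \<gamma> g t) / \<eta>
      + \<beta> / 2 * (\<Sum>t=1..T. ?\<eta>\<^sub>t t * (norm (g t))\<^sup>2)"
    by (simp add: sum.distrib sum_divide_distrib sum_distrib_left)
  also have "\<dots> \<le> (\<Sum>t=1..T. (f (w t) - f (w (t + 1))) * adasgd_scale \<gamma> g t) / \<eta>
      + \<beta> / 2 * (2 * \<eta> * (adasgd_scale \<gamma> g T - \<gamma>))"
    using sum_adasgd_step_norm_le[of \<gamma> \<eta> g T] lipschitz_constant_nonneg[OF smooth] assms(3,4)
    by (intro add_left_mono mult_left_mono) auto
  finally show ?thesis
    by (simp add: algebra_simps)
qed

lemma adasgd_sum_inner_le_suboptimality: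
  fixes f :: "'a::euclidean_space \<Rightarrow> real" and df :: "'a \<Rightarrow> 'a"
  assumes grad: "\<And>x. (f has_derivative (\<lambda>h. df x \<bullet> h)) (at x)"
    and smooth: "\<And>x y. norm (df x - df y) \<le> \<beta> * norm (x - y)"
    and fmin: "\<And>x. fstar \<le> f x" and gap: "\<And>t. t \<in> {1..T} \<Longrightarrow> f (w t) - fstar \<le> M"
    and "\<eta> > 0" "\<gamma> > 0" and iter: "adasgd_iterates \<eta> \<gamma> g w T"
  shows "(\<Sum>t=1..T. df (w t) \<bullet> g t)
    \<le> (\<gamma> * (f (w 1) - fstar) + M * (adasgd_scale \<gamma> g T - \<gamma>)) / \<eta>
      + \<eta> * \<beta> * (adasgd_scale \<gamma> g T - \<gamma>)"
proof -
  define D where "D t = f (w t) - fstar" for t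
  define r where "r = adasgd_scale \<gamma> g"
  have "(\<Sum>t=1..T. (D t - D (t + 1)) * r t) \<le> D 1 * r 0 + M * (r T - r 0) - D (T + 1) * r T"
    using summation_by_parts_le[of T D M r, OF gap[folded D_def] adasgd_scale_Suc_ge[of \<gamma> g, folded r_def]] .
  moreover have "r 0 = \<gamma>" "0 \<le> D (T + 1) * r T"
    using \<open>\<gamma> > 0\<close> fmin[of "w (T + 1)"] adasgd_scale_pos[of \<gamma> g T]
    unfolding D_def r_def by (simp_all add: adasgd_scale_0)
  ultimately have "(\<Sum>t=1..T. (f (w t) - f (w (t + 1))) * r t) \<le> \<gamma> * D 1 + M * (r T - \<gamma>)"
    by (simp add: D_def mult.commute)
  then show ?thesis
    using adasgd_sum_inner_le[OF grad smooth \<open>\<eta> > 0\<close> \<open>\<gamma> > 0\<close> iter] \<open>\<eta> > 0\<close>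
    unfolding D_def r_def by (smt (verit) divide_right_mono)
qed

theorem lemma1:
  fixes f :: "'a::euclidean_space \<Rightarrow> real" and df :: "'a \<Rightarrow> 'a"
    and \<beta> \<eta> \<gamma> fstar :: real and g w :: "nat \<Rightarrow> 'a" and T :: nat
  assumes grad: "\<And>x. (f has_derivative (\<lambda>h. df x \<bullet> h)) (at x)"
    and smooth: "\<And>x y. norm (df x - df y) \<le> \<beta> * norm (x - y)"
    and fmin: "\<And>x. fstar \<le> f x" and fstar_att: "\<exists>x. f x = fstar"
    and eta_pos: "\<eta> > 0" and gamma_pos: "\<gamma> > 0"
    and iter: "adasgd_iterates \<eta> \<gamma> g w T"
  shows "(\<Sum>t=1..T. df (w t) \<bullet> g t)
    \<le> \<gamma> * (f (w 1) - fstar) / \<eta>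
      + (2 * ((MAX t\<in>{1..T}. f (w t)) - fstar) / \<eta> + \<eta> * \<beta>) * sqrt (\<Sum>t=1..T. (norm (g t))\<^sup>2)"
proof (cases "T = 0")
  case True
  then show ?thesis using fmin[of "w 1"] eta_pos gamma_pos by simp
next
  case False
  define M where "M = (MAX t\<in>{1..T}. f (w t)) - fstar"
  define S where "S = (\<Sum>t=1..T. (norm (g t))\<^sup>2)"
  define r\<^sub>T where "r\<^sub>T = adasgd_scale \<gamma> g T"
  have gap: "f (w t) - fstar \<le> M" if "t \<in> {1..T}" for t
    using that unfolding M_def by (intro diff_right_mono Max_ge) auto
  have "0 \<le> M" "0 \<le> r\<^sub>T - \<gamma>" "r\<^sub>T - \<gamma> \<le> sqrt S" "0 \<le> \<beta>"
    using gap[of 1] False fmin[of "w 1"] adasgd_scale_ge[of \<gamma> g T] adasgd_scale_le[of \<gamma> g T] gamma_pos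
      lipschitz_constant_nonneg[OF smooth]
    unfolding r\<^sub>T_def S_def by auto
  then have M_term: "M * (r\<^sub>T - \<gamma>) \<le> 2 * M * sqrt S"
    using mult_left_mono[of "r\<^sub>T - \<gamma>" "sqrt S" M] mult_nonneg_nonneg[of M "sqrt S"] by linarith
  have \<beta>_term: "\<eta> * \<beta> * (r\<^sub>T - \<gamma>) \<le> \<eta> * \<beta> * sqrt S"
    using \<open>r\<^sub>T - \<gamma> \<le> sqrt S\<close> \<open>0 \<le> \<beta>\<close> eta_pos by (simp add: mult_left_mono)
  have "(\<gamma> * (f (w 1) - fstar) + M * (r\<^sub>T - \<gamma>)) / \<eta> + \<eta> * \<beta> * (r\<^sub>T - \<gamma>)
      \<le> \<gamma> * (f (w 1) - fstar) / \<eta> + (2 * M / \<eta> + \<eta> * \<beta>) * sqrt S"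
    using add_mono[OF divide_right_mono[OF M_term] \<beta>_term] eta_pos
    by (simp add: add_divide_distrib distrib_right)
  with adasgd_sum_inner_le_suboptimality[OF grad smooth fmin gap eta_pos gamma_pos iter]
  show ?thesis
    unfolding M_def S_def r\<^sub>T_def by linarith
qed

end
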